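(* Let $X,Y$ be shift spaces, $d \ge 1$, and $\phi : X \to Y$ a code such that $|\phi^{-1}(y)| = d$ for every $y \in Y$. Then the following are equivalent: (1) $\phi$ is open; (2) $\phi$ is bi-closing; (3) there exist $d$ cross sections $f_1,\dots,f_d : Y \to X$ of $\phi$ with $f_i(Y) \cap f_j(Y) = \emptyset$ for $i \ne j$ and $\bigcup_{i=1}^d f_i(Y) = X$; (4) for every $x \in X$ there is a cross section $f$ of $\phi$ with $x \in f(Y)$.
   Context: Shift spaces are closed shift-invariant subsets of $\mathcal{A}^{\mathbb{Z}}$; a code is a continuous shift-commuting map. Open: images of open sets are open. A cross section of $\phi$ is a continuous map $f : Y \to X$ with $\phi(f(y)) = y$ for all $y \in Y$. Bi-closing: $\phi$ never identifies two distinct left asymptotic points nor two distinct right asymptotic points, where $x,\bar x$ are left (right) asymptotic if $d(\sigma^{-n}x,\sigma^{-n}\bar x)\to0$ ($d(\sigma^{n}x,\sigma^{n}\bar x)\to0$), $d(x,\bar x)=2^{-k}$ with $k$ maximal such that $x_{[-k,k]}=\bar x_{[-k,k]}$. *)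

theory Defs
  imports Main
begin

text \<open>The metric d(x,x') = 2^(-k), k maximal with x,x' agreeing on [-k,k], is
  encoded through the agreement predicate: d(x,x') <= 2^(-k) iff agree k x x'.\<close>

definition agree :: "nat \<Rightarrow> (int \<Rightarrow> 'a) \<Rightarrow> (int \<Rightarrow> 'a) \<Rightarrow> bool" where
  "agree k x y \<longleftrightarrow> (\<forall>i. \<bar>i\<bar> \<le> int k \<longrightarrow> x i = y i)"

definition shiftp :: "int \<Rightarrow> (int \<Rightarrow> 'a) \<Rightarrow> (int \<Rightarrow> 'a)" where
  "shiftp n x = (\<lambda>i. x (i + n))"

definition closed_full :: "(int \<Rightarrow> 'a) set \<Rightarrow> bool" where
  "closed_full X \<longleftrightarrow> (\<forall>x. (\<forall>k. \<exists>x'\<in>X. agree k x x') \<longrightarrow> x \<in> X)"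

definition shift_space :: "(int \<Rightarrow> 'a::finite) set \<Rightarrow> bool" where
  "shift_space X \<longleftrightarrow> closed_full X \<and> (\<forall>x\<in>X. shiftp 1 x \<in> X \<and> shiftp (-1) x \<in> X)"

definition open_in_sub :: "(int \<Rightarrow> 'a) set \<Rightarrow> (int \<Rightarrow> 'a) set \<Rightarrow> bool" where
  "open_in_sub X U \<longleftrightarrow> U \<subseteq> X \<and> (\<forall>x\<in>U. \<exists>k. \<forall>x'\<in>X. agree k x x' \<longrightarrow> x' \<in> U)"

definition cont_on :: "(int \<Rightarrow> 'a) set \<Rightarrow> ((int \<Rightarrow> 'a) \<Rightarrow> (int \<Rightarrow> 'b)) \<Rightarrow> bool" where
  "cont_on X f \<longleftrightarrow> (\<forall>x\<in>X. \<forall>k. \<exists>m. \<forall>x'\<in>X. agree m x x' \<longrightarrow> agree k (f x) (f x'))"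

definition is_code :: "(int \<Rightarrow> 'a) set \<Rightarrow> (int \<Rightarrow> 'b) set \<Rightarrow> ((int \<Rightarrow> 'a) \<Rightarrow> (int \<Rightarrow> 'b)) \<Rightarrow> bool" where
  "is_code X Y \<phi> \<longleftrightarrow> \<phi> ` X \<subseteq> Y \<and> cont_on X \<phi> \<and> (\<forall>x\<in>X. \<phi> (shiftp 1 x) = shiftp 1 (\<phi> x))"

definition open_map :: "(int \<Rightarrow> 'a) set \<Rightarrow> (int \<Rightarrow> 'b) set \<Rightarrow> ((int \<Rightarrow> 'a) \<Rightarrow> (int \<Rightarrow> 'b)) \<Rightarrow> bool" where
  "open_map X Y \<phi> \<longleftrightarrow> (\<forall>U. open_in_sub X U \<longrightarrow> open_in_sub Y (\<phi> ` U))"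

definition left_asymp :: "(int \<Rightarrow> 'a) \<Rightarrow> (int \<Rightarrow> 'a) \<Rightarrow> bool" where
  "left_asymp x y \<longleftrightarrow> (\<forall>k. \<exists>N. \<forall>n\<ge>N. agree k (shiftp (- int n) x) (shiftp (- int n) y))"

definition right_asymp :: "(int \<Rightarrow> 'a) \<Rightarrow> (int \<Rightarrow> 'a) \<Rightarrow> bool" where
  "right_asymp x y \<longleftrightarrow> (\<forall>k. \<exists>N. \<forall>n\<ge>N. agree k (shiftp (int n) x) (shiftp (int n) y))"

definition bi_closing :: "(int \<Rightarrow> 'a) set \<Rightarrow> ((int \<Rightarrow> 'a) \<Rightarrow> (int \<Rightarrow> 'b)) \<Rightarrow> bool" where
  "bi_closing X \<phi> \<longleftrightarrow> (\<forall>x\<in>X. \<forall>y\<in>X. x \<noteq> y \<longrightarrow>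
      ((left_asymp x y \<longrightarrow> \<phi> x \<noteq> \<phi> y) \<and> (right_asymp x y \<longrightarrow> \<phi> x \<noteq> \<phi> y)))"

definition cross_section :: "(int \<Rightarrow> 'a) set \<Rightarrow> (int \<Rightarrow> 'b) set \<Rightarrow> ((int \<Rightarrow> 'a) \<Rightarrow> (int \<Rightarrow> 'b))
    \<Rightarrow> ((int \<Rightarrow> 'b) \<Rightarrow> (int \<Rightarrow> 'a)) \<Rightarrow> bool" where
  "cross_section X Y \<phi> f \<longleftrightarrow> f ` Y \<subseteq> X \<and> cont_on Y f \<and> (\<forall>y\<in>Y. \<phi> (f y) = y)"

end

theory Submission
  imports Defs "HOL-Library.Countable" "HOL-Library.Infinite_Set"
begin

text \<open>If the fibre cardinality is constant, each of the conditions forces the fibres to be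
  uniformly separated: there is a window radius K such that distinct points of a fibre
  already differ on [-K,K]. For an open code this follows from a counting argument: near a
  point z every fibre meets each of the d small cylinders around the d preimages of the image
  of z, hence meets the cylinder around z exactly once. For a bi-closing code, a failure of
  separation produces, after shifting to the first disagreement and passing to a limit by
  compactness, two distinct left or right asymptotic points with the same image.
  Conversely, separation yields bi-closing directly, and it yields the d cross sections:
  sort each fibre by a fixed enumeration of its K-windows and let the i-th section pick the
  i-th point. The sections are continuous because, by compactness, the set of K-windows of a
  fibre is locally constant and a point is locally determined by its image and its K-window.
  Finally, a cross section through every point makes images of cylinders open.\<close>

lemma agree_refl [simp]: "agree k x x"
  by (simp add: agree_def)

lemma agree_sym: "agree k x y \<Longrightarrow> agree k y x"
  by (simp add: agree_def)

lemma agree_trans: "agree k x y \<Longrightarrow> agree k y z \<Longrightarrow> agree k x z"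
  by (simp add: agree_def)

lemma agree_mono: "agree k' x y \<Longrightarrow> k \<le> k' \<Longrightarrow> agree k x y"
  by (auto simp: agree_def)

lemma agree_max_iff [simp]: "agree (max k k') x y \<longleftrightarrow> agree k x y \<and> agree k' x y"
  by (auto simp: agree_def max_def)

lemma agree_all_eq: "(\<And>k. agree k x y) \<Longrightarrow> x = y"
proof
  fix i assume "\<And>k. agree k x y"
  then have "agree (nat \<bar>i\<bar>) x y" .
  then show "x i = y i" by (simp add: agree_def)
qed

definition window :: "nat \<Rightarrow> (int \<Rightarrow> 'a) \<Rightarrow> 'a list" where
  "window k x = map x [- int k..int k]"

lemma window_eq_iff_agree: "window k x = window k y \<longleftrightarrow> agree k x y"
proof -
  have "agree k x y \<longleftrightarrow> (\<forall>i\<in>{- int k..int k}. x i = y i)"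
    unfolding agree_def by (metis abs_le_iff atLeastAtMost_iff minus_le_iff)
  then show ?thesis by (simp add: window_def map_eq_conv)
qed

lemma finite_separation_radius:
  assumes "finite F"
  shows "\<exists>k. \<forall>a\<in>F. \<forall>b\<in>F. a \<noteq> b \<longrightarrow> \<not> agree k a b"
proof -
  define g where "g a b = (SOME k. \<not> agree k a b)" for a b :: "int \<Rightarrow> 'a"
  have g: "\<not> agree (g a b) a b" if "a \<noteq> b" for a b
    unfolding g_def by (rule someI_ex) (meson agree_all_eq that)
  define k where "k = Max ((\<lambda>(a, b). g a b) ` (F \<times> F))"
  show ?thesis
  proof (intro exI ballI impI notI)
    fix a b assume ab: "a \<in> F" "b \<in> F" "a \<noteq> b" and "agree k a b"
    have "g a b \<le> k"
      unfolding k_def using assms ab by (intro Max_ge) auto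
    with \<open>agree k a b\<close> have "agree (g a b) a b" by (rule agree_mono)
    with g ab(3) show False by blast
  qed
qed

subsection \<open>Convergence and compactness\<close>

definition converges_to :: "(nat \<Rightarrow> int \<Rightarrow> 'a) \<Rightarrow> (int \<Rightarrow> 'a) \<Rightarrow> bool" where
  "converges_to s z \<longleftrightarrow> (\<forall>k. \<exists>N. \<forall>n\<ge>N. agree k (s n) z)"

lemma converges_toI: "(\<And>n. agree n (s n) z) \<Longrightarrow> converges_to s z"
  unfolding converges_to_def by (meson agree_mono)

lemma converges_to_reindex:
  assumes "converges_to s z" and "\<And>n. n \<le> r n"
  shows "converges_to (s \<circ> r) z"
  unfolding converges_to_def
proof
  fix k
  obtain N where N: "\<forall>n\<ge>N. agree k (s n) z" using assms(1) unfolding converges_to_def by blast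
  have "agree k (s (r n)) z" if "n \<ge> N" for n
    using N assms(2)[of n] that by simp
  then show "\<exists>N. \<forall>n\<ge>N. agree k ((s \<circ> r) n) z" by auto
qed

lemma converges_to_unique:
  assumes "converges_to s z" and "converges_to s z'"
  shows "z = z'"
proof (rule agree_all_eq)
  fix k
  obtain N where "\<forall>n\<ge>N. agree k (s n) z" using assms(1) unfolding converges_to_def by blast
  moreover obtain N' where "\<forall>n\<ge>N'. agree k (s n) z'" using assms(2) unfolding converges_to_def by blast
  ultimately have a: "agree k (s (max N N')) z" and b: "agree k (s (max N N')) z'" by simp_all
  show "agree k z z'" by (rule agree_trans[OF agree_sym[OF a] b])
qed

lemma closed_full_converges_to:
  assumes "closed_full X" and "\<And>n. s n \<in> X" and "converges_to s z"
  shows "z \<in> X"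
proof -
  have "\<exists>x\<in>X. agree k z x" for k
  proof -
    obtain N where "agree k (s N) z" using assms(3) unfolding converges_to_def by blast
    then show ?thesis using assms(2) by (blast dest: agree_sym)
  qed
  then show ?thesis using assms(1) unfolding closed_full_def by blast
qed

lemma cont_on_converges_to:
  assumes "cont_on X f" and "\<And>n. s n \<in> X" and "z \<in> X" and "converges_to s z"
  shows "converges_to (f \<circ> s) (f z)"
  unfolding converges_to_def
proof
  fix k
  obtain m where m: "\<forall>x'\<in>X. agree m z x' \<longrightarrow> agree k (f z) (f x')"
    using assms(1,3) unfolding cont_on_def by blast
  obtain N where N: "\<forall>n\<ge>N. agree m (s n) z" using assms(4) unfolding converges_to_def by blast
  have "agree k ((f \<circ> s) n) (f z)" if "n \<ge> N" for n
    using m assms(2) N that by (simp add: agree_sym)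
  then show "\<exists>N. \<forall>n\<ge>N. agree k ((f \<circ> s) n) (f z)" by blast
qed

lemma infinite_agreeing_subset:
  fixes s :: "nat \<Rightarrow> int \<Rightarrow> 'c::finite"
  assumes "infinite A"
  shows "\<exists>B\<subseteq>A. infinite B \<and> (\<forall>n\<in>B. \<forall>n'\<in>B. agree k (s n) (s n'))"
proof -
  have "window k ` s ` A \<subseteq> {xs. set xs \<subseteq> UNIV \<and> length xs = length [- int k..int k]}"
    by (auto simp: window_def)
  moreover have "finite {xs::'c list. set xs \<subseteq> UNIV \<and> length xs = length [- int k..int k]}"
    by (rule finite_lists_length_eq) simp
  ultimately have "finite ((window k \<circ> s) ` A)"
    by (simp add: image_comp finite_subset)
  from pigeonhole_infinite[OF assms this] obtain a where
    "a \<in> A" "infinite {b\<in>A. window k (s b) = window k (s a)}" by auto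
  then show ?thesis
    by (intro exI[of _ "{b\<in>A. window k (s b) = window k (s a)}"])
      (auto simp: window_eq_iff_agree[symmetric])
qed

definition agreeing_subset :: "(nat \<Rightarrow> int \<Rightarrow> 'c::finite) \<Rightarrow> nat set \<Rightarrow> nat \<Rightarrow> nat set" where
  "agreeing_subset s A k =
     (SOME B. B \<subseteq> A \<and> infinite B \<and> (\<forall>n\<in>B. \<forall>n'\<in>B. agree k (s n) (s n')))"

lemma agreeing_subset:
  assumes "infinite A"
  shows "agreeing_subset s A k \<subseteq> A" "infinite (agreeing_subset s A k)"
    "\<forall>n\<in>agreeing_subset s A k. \<forall>n'\<in>agreeing_subset s A k. agree k (s n) (s n')"
  using someI_ex[OF infinite_agreeing_subset[OF assms, of k s]]
  unfolding agreeing_subset_def by blast+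

primrec agreeing_nest :: "(nat \<Rightarrow> int \<Rightarrow> 'c::finite) \<Rightarrow> nat \<Rightarrow> nat set" where
  "agreeing_nest s 0 = agreeing_subset s UNIV 0"
| "agreeing_nest s (Suc k) = agreeing_subset s (agreeing_nest s k) (Suc k)"

lemma agreeing_nest:
  "infinite (agreeing_nest s k) \<and> (\<forall>n\<in>agreeing_nest s k. \<forall>n'\<in>agreeing_nest s k. agree k (s n) (s n'))"
proof (induction k)
  case 0
  show ?case using agreeing_subset[of "UNIV :: nat set" s 0] by simp
next
  case (Suc k)
  then show ?case using agreeing_subset[of "agreeing_nest s k" s "Suc k"] by simp
qed

lemma agreeing_nest_antimono: "k \<le> k' \<Longrightarrow> agreeing_nest s k' \<subseteq> agreeing_nest s k"
proof (induction k' rule: dec_induct)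
  case (step k')
  have "agreeing_nest s (Suc k') \<subseteq> agreeing_nest s k'"
    using agreeing_subset(1)[of "agreeing_nest s k'"] agreeing_nest[of s k'] by simp
  with step.IH show ?case by blast
qed simp

text \<open>Sequential compactness of the full shift, by a diagonal argument through the nest.\<close>

lemma convergent_subsequence:
  fixes s :: "nat \<Rightarrow> int \<Rightarrow> 'c::finite"
  obtains r z where "\<And>n. n \<le> r n" and "converges_to (s \<circ> r) z"
proof -
  have "\<exists>m\<ge>k. m \<in> agreeing_nest s k" for k
    using agreeing_nest[of s k] by (simp add: infinite_nat_iff_unbounded_le)
  then obtain r where r: "\<And>k. k \<le> r k" "\<And>k. r k \<in> agreeing_nest s k" by metis
  define z where "z i = s (r (nat \<bar>i\<bar>)) i" for i
  have "agree k (s (r k)) z" for k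
    unfolding agree_def
  proof (intro allI impI)
    fix i assume "\<bar>i\<bar> \<le> int k"
    then have "agreeing_nest s k \<subseteq> agreeing_nest s (nat \<bar>i\<bar>)"
      by (intro agreeing_nest_antimono) linarith
    then have "r k \<in> agreeing_nest s (nat \<bar>i\<bar>)" using r(2)[of k] by blast
    then have "agree (nat \<bar>i\<bar>) (s (r k)) (s (r (nat \<bar>i\<bar>)))"
      using r(2) agreeing_nest by blast
    then show "s (r k) i = z i" unfolding z_def agree_def by simp
  qed
  then have "converges_to (s \<circ> r) z" by (simp add: converges_toI)
  with r(1) show ?thesis by (rule that)
qed

lemma convergent_subsequence_pair:
  fixes s :: "nat \<Rightarrow> int \<Rightarrow> 'c::finite" and s' :: "nat \<Rightarrow> int \<Rightarrow> 'd::finite"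
  obtains r z z' where "\<And>n. n \<le> r n" and "converges_to (s \<circ> r) z" and "converges_to (s' \<circ> r) z'"
proof -
  obtain r1 z where r1: "\<And>n. n \<le> r1 n" and z: "converges_to (s \<circ> r1) z"
    using convergent_subsequence[of s] by blast
  obtain r2 z' where r2: "\<And>n. n \<le> r2 n" and z': "converges_to (s' \<circ> r1 \<circ> r2) z'"
    using convergent_subsequence[of "s' \<circ> r1"] by blast
  have "n \<le> (r1 \<circ> r2) n" for n using r1[of "r2 n"] r2[of n] by simp
  moreover have "converges_to (s \<circ> (r1 \<circ> r2)) z"
    using converges_to_reindex[OF z r2] by (simp add: comp_assoc)
  moreover have "converges_to (s' \<circ> (r1 \<circ> r2)) z'" using z' by (simp add: comp_assoc)
  ultimately show ?thesis by (rule that)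
qed

lemma shiftp_shiftp: "shiftp a (shiftp b x) = shiftp (a + b) x"
  unfolding shiftp_def by (simp add: ac_simps)

lemma shiftp_0 [simp]: "shiftp 0 x = x"
  by (simp add: shiftp_def)

lemma shiftp_inject: "shiftp a x = shiftp a y \<longleftrightarrow> x = y"
  by (metis add.right_inverse shiftp_0 shiftp_shiftp)

lemma shift_space_shiftp:
  assumes "shift_space X" and "x \<in> X"
  shows "shiftp n x \<in> X"
proof (induction n rule: int_induct[where k = 0])
  case base
  show ?case using assms(2) by simp
next
  case (step1 i)
  then show ?case
    using assms(1) shiftp_shiftp[of 1 i x] unfolding shift_space_def by (metis add.commute)
next
  case (step2 i)
  then show ?case
    using assms(1) shiftp_shiftp[of "-1" i x] unfolding shift_space_def by (metis uminus_add_conv_diff add.commute)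
qed

lemma is_code_shiftp:
  assumes "shift_space X" and "is_code X Y \<phi>" and "x \<in> X"
  shows "\<phi> (shiftp n x) = shiftp n (\<phi> x)"
proof -
  have right: "\<phi> (shiftp 1 w) = shiftp 1 (\<phi> w)" if "w \<in> X" for w
    using assms(2) that unfolding is_code_def by blast
  have left: "\<phi> (shiftp (-1) w) = shiftp (-1) (\<phi> w)" if "w \<in> X" for w
  proof -
    have "\<phi> w = \<phi> (shiftp 1 (shiftp (-1) w))" by (simp add: shiftp_shiftp)
    also have "\<dots> = shiftp 1 (\<phi> (shiftp (-1) w))"
      using right assms(1) that shift_space_shiftp by blast
    finally show ?thesis by (simp add: shiftp_shiftp)
  qed
  show ?thesis
  proof (induction n rule: int_induct[where k = 0])
    case base
    show ?case by simp
  next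
    case (step1 i)
    have "\<phi> (shiftp (i + 1) x) = \<phi> (shiftp 1 (shiftp i x))" by (simp add: shiftp_shiftp add.commute)
    also have "\<dots> = shiftp 1 (shiftp i (\<phi> x))"
      using right shift_space_shiftp[OF assms(1,3)] step1.IH by simp
    finally show ?case by (simp add: shiftp_shiftp add.commute)
  next
    case (step2 i)
    have "\<phi> (shiftp (i - 1) x) = \<phi> (shiftp (-1) (shiftp i x))" by (simp add: shiftp_shiftp)
    also have "\<dots> = shiftp (-1) (shiftp i (\<phi> x))"
      using left shift_space_shiftp[OF assms(1,3)] step2.IH by simp
    finally show ?case by (simp add: shiftp_shiftp)
  qed
qed

subsection \<open>Uniformly separated fibres\<close>

abbreviation fibre :: "(int \<Rightarrow> 'a) set \<Rightarrow> ((int \<Rightarrow> 'a) \<Rightarrow> 'c) \<Rightarrow> 'c \<Rightarrow> (int \<Rightarrow> 'a) set" where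
  "fibre X \<phi> y \<equiv> {x\<in>X. \<phi> x = y}"

definition fibre_separated :: "(int \<Rightarrow> 'a) set \<Rightarrow> ((int \<Rightarrow> 'a) \<Rightarrow> (int \<Rightarrow> 'b)) \<Rightarrow> nat \<Rightarrow> bool" where
  "fibre_separated X \<phi> K \<longleftrightarrow> (\<forall>x\<in>X. \<forall>x'\<in>X. \<phi> x = \<phi> x' \<and> agree K x x' \<longrightarrow> x = x')"

lemma bi_closing_if_fibre_separated:
  assumes "shift_space X" and "is_code X Y \<phi>" and "fibre_separated X \<phi> K"
  shows "bi_closing X \<phi>"
  unfolding bi_closing_def
proof (intro ballI impI conjI)
  fix x y assume xy: "x \<in> X" "y \<in> X" "x \<noteq> y"
  have "\<phi> x \<noteq> \<phi> y" if "agree K (shiftp n x) (shiftp n y)" for n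
  proof
    assume "\<phi> x = \<phi> y"
    then have "\<phi> (shiftp n x) = \<phi> (shiftp n y)" using is_code_shiftp[OF assms(1,2)] xy by simp
    then have "shiftp n x = shiftp n y"
      using assms(3) that shift_space_shiftp[OF assms(1)] xy unfolding fibre_separated_def by blast
    with xy show False by (simp add: shiftp_inject)
  qed
  then show "left_asymp x y \<Longrightarrow> \<phi> x \<noteq> \<phi> y" and "right_asymp x y \<Longrightarrow> \<phi> x \<noteq> \<phi> y"
    unfolding left_asymp_def right_asymp_def by blast+
qed

lemma open_map_if_sections_cover:
  assumes "\<phi> ` X \<subseteq> Y" and "\<forall>x\<in>X. \<exists>f. cross_section X Y \<phi> f \<and> x \<in> f ` Y"
  shows "open_map X Y \<phi>"
  unfolding open_map_def
proof (intro allI impI)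
  fix U assume U: "open_in_sub X U"
  show "open_in_sub Y (\<phi> ` U)"
    unfolding open_in_sub_def
  proof (intro conjI ballI)
    show "\<phi> ` U \<subseteq> Y" using U assms(1) unfolding open_in_sub_def by blast
  next
    fix y assume "y \<in> \<phi> ` U"
    then obtain x where x: "x \<in> U" "\<phi> x = y" by blast
    have "x \<in> X" using U x unfolding open_in_sub_def by blast
    obtain k where k: "\<forall>x'\<in>X. agree k x x' \<longrightarrow> x' \<in> U"
      using U x unfolding open_in_sub_def by blast
    obtain f y0 where f: "cross_section X Y \<phi> f" "y0 \<in> Y" "x = f y0"
      using assms(2) \<open>x \<in> X\<close> by blast
    have "y0 = y" using f x unfolding cross_section_def by metis
    with f have "y \<in> Y" "f y = x" by simp_all
    obtain m where m: "\<forall>y'\<in>Y. agree m y y' \<longrightarrow> agree k (f y) (f y')"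
      using f(1) \<open>y \<in> Y\<close> unfolding cross_section_def cont_on_def by blast
    have "y' \<in> \<phi> ` U" if "y' \<in> Y" "agree m y y'" for y'
    proof -
      have "f y' \<in> U" using m k f(1) that \<open>f y = x\<close> unfolding cross_section_def by blast
      moreover have "\<phi> (f y') = y'" using f(1) that(1) unfolding cross_section_def by blast
      ultimately show ?thesis by (metis image_eqI)
    qed
    then show "\<exists>m. \<forall>y'\<in>Y. agree m y y' \<longrightarrow> y' \<in> \<phi> ` U" by blast
  qed
qed

lemma open_map_lifts_near_images:
  assumes "open_map X Y \<phi>" and "a \<in> X"
  shows "\<exists>m. \<forall>y'\<in>Y. agree m (\<phi> a) y' \<longrightarrow> (\<exists>x'\<in>X. agree k a x' \<and> \<phi> x' = y')"
proof -
  define B where "B = {x'\<in>X. agree k a x'}"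
  have "open_in_sub X B"
    unfolding open_in_sub_def B_def by (metis (mono_tags, lifting) agree_trans mem_Collect_eq subsetI)
  then have "open_in_sub Y (\<phi> ` B)" using assms(1) unfolding open_map_def by blast
  moreover have "\<phi> a \<in> \<phi> ` B" using assms(2) unfolding B_def by simp
  ultimately obtain m where "\<forall>y'\<in>Y. agree m (\<phi> a) y' \<longrightarrow> y' \<in> \<phi> ` B"
    unfolding open_in_sub_def by blast
  then show ?thesis unfolding B_def by blast
qed

lemma open_map_near_fibres_meet_cylinders:
  assumes "open_map X Y \<phi>" and "is_code X Y \<phi>" and "z \<in> X" and "finite (fibre X \<phi> (\<phi> z))"
  shows "\<exists>m. \<forall>x\<in>X. agree m z x \<longrightarrow> (\<forall>a\<in>fibre X \<phi> (\<phi> z). \<exists>w\<in>fibre X \<phi> (\<phi> x). agree k a w)"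
proof -
  have "\<forall>a\<in>fibre X \<phi> (\<phi> z). \<exists>m. \<forall>y'\<in>Y. agree m (\<phi> z) y' \<longrightarrow> (\<exists>x'\<in>X. agree k a x' \<and> \<phi> x' = y')"
    using open_map_lifts_near_images[OF assms(1)] by force
  then obtain M where M: "\<forall>a\<in>fibre X \<phi> (\<phi> z). \<forall>y'\<in>Y. agree (M a) (\<phi> z) y' \<longrightarrow>
      (\<exists>x'\<in>X. agree k a x' \<and> \<phi> x' = y')" by (rule bchoice[THEN exE])
  obtain m where m: "\<forall>x\<in>X. agree m z x \<longrightarrow> agree (Max (M ` fibre X \<phi> (\<phi> z))) (\<phi> z) (\<phi> x)"
    using assms(2,3) unfolding is_code_def cont_on_def by blast
  have "\<exists>w\<in>fibre X \<phi> (\<phi> x). agree k a w"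
    if "x \<in> X" "agree m z x" "a \<in> fibre X \<phi> (\<phi> z)" for x a
  proof -
    have "M a \<le> Max (M ` fibre X \<phi> (\<phi> z))" using assms(4) that(3) by simp
    then have "agree (M a) (\<phi> z) (\<phi> x)" using m that(1,2) agree_mono by blast
    moreover have "\<phi> x \<in> Y" using assms(2) that(1) unfolding is_code_def by blast
    ultimately show ?thesis using M that(3) by auto
  qed
  then show ?thesis by blast
qed

text \<open>Near z every fibre has one point in each of the d pairwise disjoint cylinders around the
  preimages of the image of z; having exactly d points, it meets the cylinder around z once.\<close>

lemma open_map_locally_injective:
  assumes "open_map X Y \<phi>" and "is_code X Y \<phi>" and "d \<ge> 1"
    and card: "\<forall>y\<in>Y. card (fibre X \<phi> y) = d" and "z \<in> X"
  shows "\<exists>k. \<forall>x\<in>X. \<forall>x'\<in>X. \<phi> x = \<phi> x' \<and> agree k z x \<and> agree k z x' \<longrightarrow> x = x'"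
proof -
  define F where "F = fibre X \<phi> (\<phi> z)"
  have Y: "\<phi> x \<in> Y" if "x \<in> X" for x using assms(2) that unfolding is_code_def by blast
  have fibre: "finite (fibre X \<phi> y) \<and> card (fibre X \<phi> y) = d" if "y \<in> Y" for y
    using card that assms(3) card_ge_0_finite by force
  have "finite F" "card F = d" "z \<in> F"
    using fibre Y \<open>z \<in> X\<close> unfolding F_def by simp_all
  obtain k0 where k0: "\<forall>a\<in>F. \<forall>b\<in>F. a \<noteq> b \<longrightarrow> \<not> agree k0 a b"
    using finite_separation_radius[OF \<open>finite F\<close>] by blast
  obtain m where m: "\<forall>x\<in>X. agree m z x \<longrightarrow> (\<forall>a\<in>F. \<exists>w\<in>fibre X \<phi> (\<phi> x). agree k0 a w)"
    using open_map_near_fibres_meet_cylinders[OF assms(1,2,5)] \<open>finite F\<close> unfolding F_def by blast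
  show ?thesis
  proof (intro exI[of _ "max k0 m"] ballI impI)
    fix x x' assume xX: "x \<in> X" "x' \<in> X"
      and H: "\<phi> x = \<phi> x' \<and> agree (max k0 m) z x \<and> agree (max k0 m) z x'"
    define G where "G = fibre X \<phi> (\<phi> x)"
    have zx: "agree k0 z x" "agree k0 z x'" "agree m z x" using H by simp_all
    then have "\<forall>a\<in>F. \<exists>w. agree k0 a w \<and> w \<in> G" using m xX(1) unfolding G_def by blast
    then obtain h where "\<forall>a\<in>F. agree k0 a (h a) \<and> h a \<in> G" by (rule bchoice[THEN exE])
    then have h: "\<And>a. a \<in> F \<Longrightarrow> agree k0 a (h a) \<and> h a \<in> G" by blast
    have "inj_on h F"
    proof (rule inj_onI)
      fix a b assume "a \<in> F" "b \<in> F" "h a = h b"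
      then have "agree k0 a b" using h by (metis agree_sym agree_trans)
      then show "a = b" using k0 \<open>a \<in> F\<close> \<open>b \<in> F\<close> by blast
    qed
    moreover have "finite G" "card G = d" using fibre Y xX(1) unfolding G_def by simp_all
    ultimately have "h ` F = G"
      using h \<open>card F = d\<close> by (metis card_image card_subset_eq image_subsetI)
    moreover have "x \<in> G" "x' \<in> G" using xX H unfolding G_def by simp_all
    ultimately obtain a b where ab: "a \<in> F" "x = h a" "b \<in> F" "x' = h b" by blast
    have "a = z" if "a \<in> F" "agree k0 z (h a)" for a
      using k0 that \<open>z \<in> F\<close> h by (metis agree_sym agree_trans)
    then have "a = z" "b = z" using ab zx by simp_all
    then show "x = x'" using ab by simp
  qed
qed

lemma fibre_separated_if_open_map:
  assumes "open_map X Y \<phi>" and "shift_space X" and "is_code X Y \<phi>" and "d \<ge> 1"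
    and "\<forall>y\<in>Y. card (fibre X \<phi> y) = d"
  shows "\<exists>K. fibre_separated X \<phi> K"
proof (rule ccontr)
  assume "\<nexists>K. fibre_separated X \<phi> K"
  then have "\<forall>K. \<exists>x x'. x \<in> X \<and> x' \<in> X \<and> \<phi> x = \<phi> x' \<and> agree K x x' \<and> x \<noteq> x'"
    unfolding fibre_separated_def by blast
  then obtain s s' where s: "\<And>K. s K \<in> X \<and> s' K \<in> X \<and> \<phi> (s K) = \<phi> (s' K)
      \<and> agree K (s K) (s' K) \<and> s K \<noteq> s' K" by metis
  obtain r z where r: "\<And>n. n \<le> r n" and lim: "converges_to (s \<circ> r) z"
    using convergent_subsequence[of s] by blast
  have "closed_full X" using assms(2) unfolding shift_space_def by blast
  then have "z \<in> X" using _ lim by (rule closed_full_converges_to) (simp add: s)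
  then obtain k where k: "\<forall>x\<in>X. \<forall>x'\<in>X. \<phi> x = \<phi> x' \<and> agree k z x \<and> agree k z x' \<longrightarrow> x = x'"
    using open_map_locally_injective[OF assms(1,3,4,5)] by blast
  obtain N where N: "\<forall>n\<ge>N. agree k (s (r n)) z" using lim unfolding converges_to_def by auto
  define n where "n = r (max N k)"
  have "agree k z (s n)" using N r[of "max N k"] unfolding n_def by (simp add: agree_sym)
  moreover have "agree k (s n) (s' n)"
    using s[of n] r[of "max N k"] unfolding n_def by (metis agree_mono max.bounded_iff)
  ultimately have "agree k z (s' n)" by (rule agree_trans)
  with k s[of n] \<open>agree k z (s n)\<close> show False by blast
qed

lemma nearest_difference:
  fixes x x' :: "int \<Rightarrow> 'a"
  assumes "x \<noteq> x'" and "agree K x x'"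
  shows "\<exists>p. x p \<noteq> x' p \<and> int K < \<bar>p\<bar> \<and> (\<forall>i. \<bar>i\<bar> < \<bar>p\<bar> \<longrightarrow> x i = x' i)"
proof -
  define Q where "Q j \<longleftrightarrow> x (int j) \<noteq> x' (int j) \<or> x (- int j) \<noteq> x' (- int j)" for j
  have Q: "Q (nat \<bar>i\<bar>)" if "x i \<noteq> x' i" for i
    unfolding Q_def using that by (cases "i \<ge> 0") auto
  obtain i where "x i \<noteq> x' i" using assms(1) by blast
  then have "Q (LEAST j. Q j)" by (rule LeastI[of Q, OF Q])
  moreover have "\<bar>int (LEAST j. Q j)\<bar> = int (LEAST j. Q j)" "\<bar>- int (LEAST j. Q j)\<bar> = int (LEAST j. Q j)"
    by simp_all
  ultimately obtain p where p: "x p \<noteq> x' p" "\<bar>p\<bar> = int (LEAST j. Q j)"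
    unfolding Q_def by blast
  have "x i = x' i" if "\<bar>i\<bar> < \<bar>p\<bar>" for i
  proof (rule ccontr)
    assume "x i \<noteq> x' i"
    then have "(LEAST j. Q j) \<le> nat \<bar>i\<bar>" by (rule Least_le[of Q, OF Q])
    with that p(2) show False by linarith
  qed
  moreover have "int K < \<bar>p\<bar>"
    using assms(2) p(1) unfolding agree_def by (meson not_le)
  ultimately show ?thesis using p(1) by blast
qed

text \<open>Shift the first disagreement of two K-close points to the origin.\<close>

lemma unseparated_pair_at_origin:
  assumes "shift_space X" and "is_code X Y \<phi>" and "x \<in> X" "x' \<in> X" "\<phi> x = \<phi> x'"
    and "x \<noteq> x'" and "agree K x x'"
  shows "\<exists>w\<in>X. \<exists>w'\<in>X. \<phi> w = \<phi> w' \<and> w 0 \<noteq> w' 0 \<and>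
           ((\<forall>j. 1 \<le> j \<and> j \<le> int K \<longrightarrow> w (-j) = w' (-j)) \<or> (\<forall>j. 1 \<le> j \<and> j \<le> int K \<longrightarrow> w j = w' j))"
proof -
  obtain p where p: "x p \<noteq> x' p" "int K < \<bar>p\<bar>" "\<forall>i. \<bar>i\<bar> < \<bar>p\<bar> \<longrightarrow> x i = x' i"
    using nearest_difference[OF assms(6,7)] by blast
  define w where "w = shiftp p x"
  define w' where "w' = shiftp p x'"
  have "w \<in> X" "w' \<in> X"
    using assms(1,3,4) shift_space_shiftp unfolding w_def w'_def by blast+
  moreover have "\<phi> w = \<phi> w'"
    using assms(1-5) is_code_shiftp unfolding w_def w'_def by metis
  moreover have "w 0 \<noteq> w' 0" using p(1) unfolding w_def w'_def shiftp_def by simp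
  moreover have "(\<forall>j. 1 \<le> j \<and> j \<le> int K \<longrightarrow> w (-j) = w' (-j)) \<or> (\<forall>j. 1 \<le> j \<and> j \<le> int K \<longrightarrow> w j = w' j)"
  proof (cases "p > 0")
    case True
    then have "w (-j) = w' (-j)" if "1 \<le> j" "j \<le> int K" for j
      using p(2,3) that unfolding w_def w'_def shiftp_def by simp
    then show ?thesis by blast
  next
    case False
    then have "w j = w' j" if "1 \<le> j" "j \<le> int K" for j
      using p(2,3) that unfolding w_def w'_def shiftp_def by simp
    then show ?thesis by blast
  qed
  ultimately show ?thesis by blast
qed

lemma left_asymp_if_eq_on_left:
  assumes "\<forall>j\<ge>1. z (-j) = z' (-j)"
  shows "left_asymp z z'"
  unfolding left_asymp_def agree_def shiftp_def
proof (intro allI exI[of _ "Suc _"] impI)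
  fix k n i assume "Suc k \<le> n" "\<bar>i\<bar> \<le> int k"
  then have "1 \<le> int n - i" by linarith
  then have "z (- (int n - i)) = z' (- (int n - i))" using assms by blast
  then show "z (i + - int n) = z' (i + - int n)" by (simp add: algebra_simps)
qed

lemma right_asymp_if_eq_on_right:
  assumes "\<forall>j\<ge>1. z j = z' j"
  shows "right_asymp z z'"
  unfolding right_asymp_def agree_def shiftp_def
proof (intro allI exI[of _ "Suc _"] impI)
  fix k n i assume "Suc k \<le> n" "\<bar>i\<bar> \<le> int k"
  then show "z (i + int n) = z' (i + int n)" using assms by simp
qed

lemma one_sided_agreement_limit:
  assumes "converges_to w z" and "converges_to w' z'" and "\<And>n. w n 0 \<noteq> w' n 0"
    and "\<And>n. (\<forall>j. 1 \<le> j \<and> j \<le> int n \<longrightarrow> w n (-j) = w' n (-j)) \<or>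
              (\<forall>j. 1 \<le> j \<and> j \<le> int n \<longrightarrow> w n j = w' n j)"
  shows "z 0 \<noteq> z' 0" and "(\<forall>j\<ge>1. z (-j) = z' (-j)) \<or> (\<forall>j\<ge>1. z j = z' j)"
proof -
  have close: "\<exists>n\<ge>k. agree k (w n) z \<and> agree k (w' n) z'" for k
  proof -
    obtain N N' where "\<forall>n\<ge>N. agree k (w n) z" "\<forall>n\<ge>N'. agree k (w' n) z'"
      using assms(1,2) unfolding converges_to_def by blast
    then show ?thesis by (intro exI[of _ "max k (max N N')"]) simp
  qed
  obtain n where "agree 0 (w n) z" "agree 0 (w' n) z'" using close by blast
  then have "w n 0 = z 0" "w' n 0 = z' 0" unfolding agree_def by simp_all
  then show "z 0 \<noteq> z' 0" using assms(3)[of n] by simp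
  show "(\<forall>j\<ge>1. z (-j) = z' (-j)) \<or> (\<forall>j\<ge>1. z j = z' j)"
  proof (rule ccontr)
    assume "\<not> ?thesis"
    then obtain a b where ab: "1 \<le> a" "z (-a) \<noteq> z' (-a)" "1 \<le> b" "z b \<noteq> z' b" by blast
    obtain n where n: "nat (max a b) \<le> n" "agree (nat (max a b)) (w n) z" "agree (nat (max a b)) (w' n) z'"
      using close by blast
    then have "w n (-a) = z (-a)" "w' n (-a) = z' (-a)" "w n b = z b" "w' n b = z' b"
      using ab unfolding agree_def by auto
    moreover have "a \<le> int n" "b \<le> int n" using n(1) by auto
    ultimately show False using assms(4)[of n] ab by auto
  qed
qed

lemma fibre_separated_if_bi_closing:
  assumes "bi_closing X \<phi>" and "shift_space X" and "is_code X Y \<phi>"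
  shows "\<exists>K. fibre_separated X \<phi> K"
proof (rule ccontr)
  assume "\<nexists>K. fibre_separated X \<phi> K"
  then have "\<forall>K. \<exists>x\<in>X. \<exists>x'\<in>X. \<phi> x = \<phi> x' \<and> x \<noteq> x' \<and> agree K x x'"
    unfolding fibre_separated_def by blast
  then have "\<forall>K. \<exists>w\<in>X. \<exists>w'\<in>X. \<phi> w = \<phi> w' \<and> w 0 \<noteq> w' 0 \<and>
      ((\<forall>j. 1 \<le> j \<and> j \<le> int K \<longrightarrow> w (-j) = w' (-j)) \<or> (\<forall>j. 1 \<le> j \<and> j \<le> int K \<longrightarrow> w j = w' j))"
    using unseparated_pair_at_origin[OF assms(2,3)] by metis
  then obtain w w' where w: "\<And>K. w K \<in> X \<and> w' K \<in> X \<and> \<phi> (w K) = \<phi> (w' K) \<and> w K 0 \<noteq> w' K 0 \<and>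
      ((\<forall>j. 1 \<le> j \<and> j \<le> int K \<longrightarrow> w K (-j) = w' K (-j)) \<or> (\<forall>j. 1 \<le> j \<and> j \<le> int K \<longrightarrow> w K j = w' K j))"
    by metis
  obtain r z z' where r: "\<And>n. n \<le> r n"
    and lim: "converges_to (w \<circ> r) z" "converges_to (w' \<circ> r) z'"
    using convergent_subsequence_pair[of w w'] by blast
  have "closed_full X" using assms(2) unfolding shift_space_def by blast
  have X: "z \<in> X" "z' \<in> X"
    using closed_full_converges_to[OF \<open>closed_full X\<close> _ lim(1)]
      closed_full_converges_to[OF \<open>closed_full X\<close> _ lim(2)] by (simp_all add: w)
  have cont: "cont_on X \<phi>" using assms(3) unfolding is_code_def by blast
  have "converges_to (\<phi> \<circ> (w \<circ> r)) (\<phi> z)" "converges_to (\<phi> \<circ> (w' \<circ> r)) (\<phi> z')"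
    using cont_on_converges_to[OF cont _ X(1) lim(1)] cont_on_converges_to[OF cont _ X(2) lim(2)]
    by (simp_all add: w)
  moreover have "\<phi> \<circ> (w \<circ> r) = \<phi> \<circ> (w' \<circ> r)" using w by auto
  ultimately have "\<phi> z = \<phi> z'" by (metis converges_to_unique)
  have "(\<forall>j. 1 \<le> j \<and> j \<le> int n \<longrightarrow> (w \<circ> r) n (-j) = (w' \<circ> r) n (-j)) \<or>
        (\<forall>j. 1 \<le> j \<and> j \<le> int n \<longrightarrow> (w \<circ> r) n j = (w' \<circ> r) n j)" for n
    using w[of "r n"] r[of n] by force
  then have "z 0 \<noteq> z' 0" "(\<forall>j\<ge>1. z (-j) = z' (-j)) \<or> (\<forall>j\<ge>1. z j = z' j)"
    using one_sided_agreement_limit[OF lim] w by auto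
  then show False
    using assms(1) X \<open>\<phi> z = \<phi> z'\<close> left_asymp_if_eq_on_left right_asymp_if_eq_on_right
    unfolding bi_closing_def by metis
qed

subsection \<open>Cross sections from separated fibres\<close>

definition window_codes :: "'a::countable list set \<Rightarrow> nat list" where
  "window_codes P = sorted_list_of_set (to_nat ` P)"

text \<open>The i-th section (for i in {1..d}) picks the point of the fibre whose K-window has the
  i-th smallest code.\<close>

definition nth_section :: "(int \<Rightarrow> 'a::finite) set \<Rightarrow> ((int \<Rightarrow> 'a) \<Rightarrow> (int \<Rightarrow> 'b)) \<Rightarrow> nat \<Rightarrow> nat
    \<Rightarrow> (int \<Rightarrow> 'b) \<Rightarrow> (int \<Rightarrow> 'a)" where
  "nth_section X \<phi> K i y = (THE x. x \<in> fibre X \<phi> y \<and>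
     to_nat (window K x) = window_codes (window K ` fibre X \<phi> y) ! (i - 1))"

locale separated_code =
  fixes X :: "(int \<Rightarrow> 'a::finite) set" and Y :: "(int \<Rightarrow> 'b) set"
    and \<phi> :: "(int \<Rightarrow> 'a) \<Rightarrow> (int \<Rightarrow> 'b)" and d K :: nat
  assumes closed: "closed_full X" and code: "is_code X Y \<phi>" and d: "d \<ge> 1"
    and card: "\<forall>y\<in>Y. card (fibre X \<phi> y) = d"
    and separated: "fibre_separated X \<phi> K"
begin

abbreviation windows :: "(int \<Rightarrow> 'b) \<Rightarrow> 'a list set" where
  "windows y \<equiv> window K ` fibre X \<phi> y"

lemma image_in_Y: "x \<in> X \<Longrightarrow> \<phi> x \<in> Y"
  using code unfolding is_code_def by blast

lemma code_continuous: "cont_on X \<phi>"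
  using code unfolding is_code_def by blast

lemma separatedD: "x \<in> X \<Longrightarrow> x' \<in> X \<Longrightarrow> \<phi> x = \<phi> x' \<Longrightarrow> agree K x x' \<Longrightarrow> x = x'"
  using separated unfolding fibre_separated_def by blast

lemma inj_on_window: "inj_on (window K) (fibre X \<phi> y)"
  by (rule inj_onI) (auto simp: window_eq_iff_agree intro: separatedD)

lemma windows_card:
  assumes "y \<in> Y"
  shows "finite (windows y)" and "card (windows y) = d"
proof -
  show c: "card (windows y) = d" using card_image[OF inj_on_window] card assms by simp
  show "finite (windows y)" using c d by (intro card_ge_0_finite) simp
qed

lemma close_if_images_close:
  assumes "x \<in> X"
  shows "\<exists>m. \<forall>x'\<in>X. agree m (\<phi> x) (\<phi> x') \<and> agree K x x' \<longrightarrow> agree k x x'"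
proof (rule ccontr)
  assume "\<not> ?thesis"
  then obtain s where s: "\<And>m. s m \<in> X \<and> agree m (\<phi> x) (\<phi> (s m)) \<and> agree K x (s m) \<and> \<not> agree k x (s m)"
    by metis
  obtain r z where r: "\<And>n. n \<le> r n" and lim: "converges_to (s \<circ> r) z"
    using convergent_subsequence[of s] by blast
  have "z \<in> X" using closed_full_converges_to[OF closed _ lim] s by simp
  have "converges_to (\<phi> \<circ> s) (\<phi> x)" using s by (intro converges_toI) (simp add: agree_sym)
  then have "converges_to (\<phi> \<circ> s \<circ> r) (\<phi> x)" using r by (rule converges_to_reindex)
  then have "converges_to (\<phi> \<circ> (s \<circ> r)) (\<phi> x)" by (simp add: comp_assoc)
  moreover have "converges_to (\<phi> \<circ> (s \<circ> r)) (\<phi> z)"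
    using cont_on_converges_to[OF code_continuous _ \<open>z \<in> X\<close> lim] s by simp
  ultimately have "\<phi> z = \<phi> x" using converges_to_unique by metis
  obtain N where "\<forall>n\<ge>N. agree (max K k) (s (r n)) z"
    using lim unfolding converges_to_def by (metis comp_apply)
  then have near: "agree K (s (r N)) z" "agree k (s (r N)) z" by simp_all
  have "agree K x z" using s[of "r N"] near(1) by (blast intro: agree_trans)
  then have "z = x" using separatedD[OF \<open>z \<in> X\<close> assms \<open>\<phi> z = \<phi> x\<close>] by (simp add: agree_sym)
  then show False using s[of "r N"] near(2) by (simp add: agree_sym)
qed

lemma windows_locally_constant:
  assumes "y \<in> Y"
  shows "\<exists>m. \<forall>y'\<in>Y. agree m y y' \<longrightarrow> windows y' = windows y"
proof -
  have "\<exists>m. \<forall>y'\<in>Y. agree m y y' \<longrightarrow> windows y' \<subseteq> windows y"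
  proof (rule ccontr)
    assume none: "\<not> ?thesis"
    have "\<forall>m. \<exists>x. x \<in> X \<and> agree m y (\<phi> x) \<and> window K x \<notin> windows y"
    proof
      fix m
      obtain y' where "y' \<in> Y" "agree m y y'" "\<not> windows y' \<subseteq> windows y"
        using none by blast
      then obtain v where "v \<in> windows y'" "v \<notin> windows y" by blast
      then obtain x where "x \<in> X" "\<phi> x = y'" "window K x \<notin> windows y" by blast
      with \<open>agree m y y'\<close> show "\<exists>x. x \<in> X \<and> agree m y (\<phi> x) \<and> window K x \<notin> windows y"
        by (intro exI[of _ x]) simp
    qed
    then obtain s where "\<forall>m. s m \<in> X \<and> agree m y (\<phi> (s m)) \<and> window K (s m) \<notin> windows y"
      by (rule choice[THEN exE])
    then have s: "\<And>m. s m \<in> X \<and> agree m y (\<phi> (s m)) \<and> window K (s m) \<notin> windows y" by blast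
    obtain r z where r: "\<And>n. n \<le> r n" and lim: "converges_to (s \<circ> r) z"
      using convergent_subsequence[of s] by blast
    have "z \<in> X" using closed_full_converges_to[OF closed _ lim] s by simp
    have "converges_to (\<phi> \<circ> s) y" using s by (intro converges_toI) (simp add: agree_sym)
    then have "converges_to (\<phi> \<circ> s \<circ> r) y" using r by (rule converges_to_reindex)
    then have "converges_to (\<phi> \<circ> (s \<circ> r)) y" by (simp add: comp_assoc)
    moreover have "converges_to (\<phi> \<circ> (s \<circ> r)) (\<phi> z)"
      using cont_on_converges_to[OF code_continuous _ \<open>z \<in> X\<close> lim] s by simp
    ultimately have "\<phi> z = y" using converges_to_unique by metis
    obtain N where "\<forall>n\<ge>N. agree K (s (r n)) z"
      using lim unfolding converges_to_def by auto
    then have "window K (s (r N)) = window K z" by (simp add: window_eq_iff_agree)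
    then show False using s[of "r N"] \<open>z \<in> X\<close> \<open>\<phi> z = y\<close> by auto
  qed
  then obtain m where m: "\<forall>y'\<in>Y. agree m y y' \<longrightarrow> windows y' \<subseteq> windows y" by blast
  have "windows y' = windows y" if "y' \<in> Y" "agree m y y'" for y'
  proof (rule card_subset_eq)
    show "finite (windows y)" "windows y' \<subseteq> windows y" using windows_card(1) assms m that by blast+
    show "card (windows y') = card (windows y)" using windows_card(2) assms that(1) by simp
  qed
  then show ?thesis by blast
qed

lemma window_codes:
  assumes "y \<in> Y"
  shows "length (window_codes (windows y)) = d" and "distinct (window_codes (windows y))"
    and "set (window_codes (windows y)) = to_nat ` windows y"
proof -
  have "inj_on to_nat (windows y)" by (rule inj_on_subset[OF inj_to_nat]) simp
  then have "card (to_nat ` windows y) = d" by (simp add: card_image windows_card(2)[OF assms])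
  then show "length (window_codes (windows y)) = d" unfolding window_codes_def by simp
  show "distinct (window_codes (windows y))" unfolding window_codes_def by simp
  show "set (window_codes (windows y)) = to_nat ` windows y"
    unfolding window_codes_def using windows_card(1)[OF assms] by simp
qed

lemma nth_section_eqI:
  assumes "x \<in> fibre X \<phi> y" and "to_nat (window K x) = window_codes (windows y) ! (i - 1)"
  shows "nth_section X \<phi> K i y = x"
  unfolding nth_section_def
proof (rule the_equality)
  fix x' assume x': "x' \<in> fibre X \<phi> y \<and> to_nat (window K x') = window_codes (windows y) ! (i - 1)"
  then have "to_nat (window K x') = to_nat (window K x)" using assms(2) by simp
  then have "window K x' = window K x" by (rule injD[OF inj_to_nat])
  then have "agree K x' x" by (simp add: window_eq_iff_agree)
  then show "x' = x" using x' assms(1) by (intro separatedD) simp_all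
qed (use assms in blast)

lemma nth_section:
  assumes "y \<in> Y" and "i \<in> {1..d}"
  shows "nth_section X \<phi> K i y \<in> fibre X \<phi> y"
    and "to_nat (window K (nth_section X \<phi> K i y)) = window_codes (windows y) ! (i - 1)"
proof -
  have "window_codes (windows y) ! (i - 1) \<in> set (window_codes (windows y))"
    by (rule nth_mem) (use window_codes(1)[OF assms(1)] assms(2) in auto)
  then obtain x where "x \<in> fibre X \<phi> y" "to_nat (window K x) = window_codes (windows y) ! (i - 1)"
    using window_codes(3)[OF assms(1)] by auto
  moreover from this have "nth_section X \<phi> K i y = x" by (rule nth_section_eqI)
  ultimately show "nth_section X \<phi> K i y \<in> fibre X \<phi> y"
    and "to_nat (window K (nth_section X \<phi> K i y)) = window_codes (windows y) ! (i - 1)"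
    by simp_all
qed

lemma cross_section_nth_section:
  assumes "i \<in> {1..d}"
  shows "cross_section X Y \<phi> (nth_section X \<phi> K i)"
  unfolding cross_section_def
proof (intro conjI)
  show "nth_section X \<phi> K i ` Y \<subseteq> X" and "\<forall>y\<in>Y. \<phi> (nth_section X \<phi> K i y) = y"
    using nth_section(1)[OF _ assms] by auto
  show "cont_on Y (nth_section X \<phi> K i)"
    unfolding cont_on_def
  proof (intro ballI allI)
    fix y k assume "y \<in> Y"
    define x where "x = nth_section X \<phi> K i y"
    have x: "x \<in> X" "\<phi> x = y" using nth_section(1)[OF \<open>y \<in> Y\<close> assms] unfolding x_def by simp_all
    obtain m1 where m1: "\<forall>y'\<in>Y. agree m1 y y' \<longrightarrow> windows y' = windows y"
      using windows_locally_constant[OF \<open>y \<in> Y\<close>] by blast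
    obtain m2 where m2: "\<forall>x'\<in>X. agree m2 (\<phi> x) (\<phi> x') \<and> agree K x x' \<longrightarrow> agree k x x'"
      using close_if_images_close[OF x(1)] by blast
    have "agree k x (nth_section X \<phi> K i y')" if "y' \<in> Y" "agree (max m1 m2) y y'" for y'
    proof -
      let ?x' = "nth_section X \<phi> K i y'"
      have "?x' \<in> X" "\<phi> ?x' = y'" using nth_section(1)[OF that(1) assms] by simp_all
      have "windows y' = windows y" using m1 that by simp
      then have "to_nat (window K ?x') = to_nat (window K x)"
        using nth_section(2)[OF that(1) assms] nth_section(2)[OF \<open>y \<in> Y\<close> assms] unfolding x_def by simp
      then have "agree K x ?x'" by (simp add: window_eq_iff_agree[symmetric] inj_eq[OF inj_to_nat])
      then show ?thesis using m2 \<open>?x' \<in> X\<close> \<open>\<phi> ?x' = y'\<close> x(2) that(2) by simp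
    qed
    then show "\<exists>m. \<forall>y'\<in>Y. agree m y y' \<longrightarrow> agree k (nth_section X \<phi> K i y) (nth_section X \<phi> K i y')"
      unfolding x_def by blast
  qed
qed

lemma nth_section_images_disjoint:
  assumes "i \<in> {1..d}" and "j \<in> {1..d}" and "i \<noteq> j"
  shows "nth_section X \<phi> K i ` Y \<inter> nth_section X \<phi> K j ` Y = {}"
proof (rule ccontr)
  assume "\<not> ?thesis"
  then obtain y y' where yy: "y \<in> Y" "y' \<in> Y" "nth_section X \<phi> K i y = nth_section X \<phi> K j y'"
    by blast
  then have "y = y'" using nth_section(1)[OF yy(1) assms(1)] nth_section(1)[OF yy(2) assms(2)] by auto
  then have "window_codes (windows y) ! (i - 1) = window_codes (windows y) ! (j - 1)"
    using nth_section(2)[OF yy(1) assms(1)] nth_section(2)[OF yy(1) assms(2)] yy(3) by simp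
  moreover have "i - 1 < length (window_codes (windows y))" "j - 1 < length (window_codes (windows y))"
    using window_codes(1)[OF yy(1)] assms(1,2) by auto
  ultimately have "i - 1 = j - 1" using nth_eq_iff_index_eq[OF window_codes(2)[OF yy(1)]] by blast
  with assms show False by (cases i; cases j) auto
qed

lemma nth_section_images_cover: "(\<Union>i\<in>{1..d}. nth_section X \<phi> K i ` Y) = X"
proof
  show "(\<Union>i\<in>{1..d}. nth_section X \<phi> K i ` Y) \<subseteq> X" using nth_section(1) by blast
  show "X \<subseteq> (\<Union>i\<in>{1..d}. nth_section X \<phi> K i ` Y)"
  proof
    fix x assume "x \<in> X"
    define y where "y = \<phi> x"
    have "y \<in> Y" using image_in_Y \<open>x \<in> X\<close> unfolding y_def by simp
    have "to_nat (window K x) \<in> set (window_codes (windows y))"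
      using window_codes(3)[OF \<open>y \<in> Y\<close>] \<open>x \<in> X\<close> unfolding y_def by simp
    then obtain t where t: "t < d" "window_codes (windows y) ! t = to_nat (window K x)"
      unfolding in_set_conv_nth window_codes(1)[OF \<open>y \<in> Y\<close>] by blast
    then have "nth_section X \<phi> K (Suc t) y = x"
      using \<open>x \<in> X\<close> by (intro nth_section_eqI) (simp_all add: y_def)
    moreover have "Suc t \<in> {1..d}" using t by simp
    ultimately show "x \<in> (\<Union>i\<in>{1..d}. nth_section X \<phi> K i ` Y)" using \<open>y \<in> Y\<close> by blast
  qed
qed

end

lemma sections_partition_if_fibre_separated:
  fixes X :: "(int \<Rightarrow> 'a::finite) set"
  assumes "shift_space X" and "is_code X Y \<phi>" and "d \<ge> 1"
    and "\<forall>y\<in>Y. card (fibre X \<phi> y) = d" and "fibre_separated X \<phi> K"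
  shows "\<exists>f. (\<forall>i\<in>{1..d}. cross_section X Y \<phi> (f i))
           \<and> (\<forall>i\<in>{1..d}. \<forall>j\<in>{1..d}. i \<noteq> j \<longrightarrow> f i ` Y \<inter> f j ` Y = {})
           \<and> (\<Union>i\<in>{1..d}. f i ` Y) = X"
proof -
  interpret separated_code X Y \<phi> d K
    using assms by unfold_locales (simp_all add: shift_space_def)
  show ?thesis
    using cross_section_nth_section nth_section_images_disjoint nth_section_images_cover
    by (intro exI[of _ "nth_section X \<phi> K"] conjI) blast+
qed

theorem proposition4p6:
  fixes X :: "(int \<Rightarrow> 'a::finite) set" and Y :: "(int \<Rightarrow> 'b::finite) set"
    and \<phi> :: "(int \<Rightarrow> 'a) \<Rightarrow> (int \<Rightarrow> 'b)" and d :: nat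
  assumes "shift_space X" and "shift_space Y" and "d \<ge> 1"
    and "is_code X Y \<phi>"
    and "\<forall>y\<in>Y. card {x\<in>X. \<phi> x = y} = d"
  shows "(open_map X Y \<phi> \<longleftrightarrow> bi_closing X \<phi>)
       \<and> (bi_closing X \<phi> \<longleftrightarrow>
            (\<exists>f. (\<forall>i\<in>{1..d}. cross_section X Y \<phi> (f i))
               \<and> (\<forall>i\<in>{1..d}. \<forall>j\<in>{1..d}. i \<noteq> j \<longrightarrow> f i ` Y \<inter> f j ` Y = {})
               \<and> (\<Union>i\<in>{1..d}. f i ` Y) = X))
       \<and> ((\<exists>f. (\<forall>i\<in>{1..d}. cross_section X Y \<phi> (f i))
               \<and> (\<forall>i\<in>{1..d}. \<forall>j\<in>{1..d}. i \<noteq> j \<longrightarrow> f i ` Y \<inter> f j ` Y = {})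
               \<and> (\<Union>i\<in>{1..d}. f i ` Y) = X)
          \<longleftrightarrow> (\<forall>x\<in>X. \<exists>f. cross_section X Y \<phi> f \<and> x \<in> f ` Y))"
    (is "(?open \<longleftrightarrow> ?bi_closing) \<and> (?bi_closing \<longleftrightarrow> ?partition) \<and> (?partition \<longleftrightarrow> ?cover)")
proof -
  have sep_bi_closing: "?bi_closing" if "fibre_separated X \<phi> K" for K
    using bi_closing_if_fibre_separated[OF assms(1,4) that] .
  have sep_partition: "?partition" if "fibre_separated X \<phi> K" for K
    using sections_partition_if_fibre_separated[OF assms(1,4,3,5) that] .
  have cover_open: "?cover \<Longrightarrow> ?open"
    using open_map_if_sections_cover[of \<phi> X Y] assms(4) unfolding is_code_def by blast
  have open_bi_closing: "?open \<Longrightarrow> ?bi_closing"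
    using fibre_separated_if_open_map[OF _ assms(1,4,3,5)] sep_bi_closing by blast
  have bi_closing_partition: "?bi_closing \<Longrightarrow> ?partition"
    using fibre_separated_if_bi_closing[OF _ assms(1,4)] sep_partition by blast
  have partition_cover: "?partition \<Longrightarrow> ?cover" by blast
  show ?thesis
    using open_bi_closing bi_closing_partition partition_cover cover_open by argo
qed

end
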